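(* Let $A_1A_2A_3A_4$ be a convex quadrilateral in $\mathbb{R}^2$ and let $c>0$. Consider positive weights $(B_1)_{1234},(B_2)_{1234},(B_3)_{1234},(B_4)_{1234}$ (variable weights) for which the weighted floating case holds and the weighted Fermat–Torricelli point (the minimizer of $\sum_{i=1}^4 (B_i)_{1234}\|X-A_i\|$) is a fixed interior point $A_0$, and write $\alpha_{i0j}=\angle A_iA_0A_j$. Then the dynamic plasticity of this variable weighted Fermat–Torricelli tree of degree four is given by the three equations \[ (B_1)_{1234}^2+(B_2)_{1234}^2+2(B_1)_{1234}(B_2)_{1234}\cos\alpha_{102}=(B_3)_{1234}^2+(B_4)_{1234}^2+2(B_3)_{1234}(B_4)_{1234}\cos\alpha_{304}, \] \[ (B_1)_{1234}^2+(B_4)_{1234}^2+2(B_1)_{1234}(B_4)_{1234}\cos\alpha_{104}=(B_2)_{1234}^2+(B_3)_{1234}^2+2(B_2)_{1234}(B_3)_{1234}\cos\alpha_{203}, \] \[ (B_1)_{1234}+(B_2)_{1234}+(B_3)_{1234}+(B_4)_{1234}=c. \]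
   Context: The weighted floating case for weights $B_i$ at $A_i$ means $\left\|\sum_{j\ne i}B_j\vec u_{ij}\right\|>B_i$ for each $i$, where $\vec u_{kl}$ is the unit vector from $A_k$ to $A_l$; then the weighted Fermat–Torricelli point $A_0$ is not a vertex and satisfies $\sum_{i=1}^4B_i\vec u_{0i}=\vec 0$. The dynamic plasticity of a weighted Fermat–Torricelli tree of degree four is the set of quadruples of weights with fixed sum $c$ for which the weighted Fermat–Torricelli point (and hence the tree joining it to the four vertices) stays the same for the fixed quadrilateral. *)

theory Defs
  imports "HOL-Analysis.Analysis"
begin

type_synonym point = "real^2"

definition orient :: "point \<Rightarrow> point \<Rightarrow> point \<Rightarrow> real" where
  "orient p q r = (q$1 - p$1) * (r$2 - p$2) - (q$2 - p$2) * (r$1 - p$1)"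

definition convex_quadrilateral :: "(nat \<Rightarrow> point) \<Rightarrow> bool" where
  "convex_quadrilateral A \<longleftrightarrow>
     (orient (A 1) (A 2) (A 3) > 0 \<and> orient (A 2) (A 3) (A 4) > 0 \<and>
      orient (A 3) (A 4) (A 1) > 0 \<and> orient (A 4) (A 1) (A 2) > 0) \<or>
     (orient (A 1) (A 2) (A 3) < 0 \<and> orient (A 2) (A 3) (A 4) < 0 \<and>
      orient (A 3) (A 4) (A 1) < 0 \<and> orient (A 4) (A 1) (A 2) < 0)"

definition unit_vec :: "point \<Rightarrow> point \<Rightarrow> point" where
  "unit_vec P Q = (1 / norm (Q - P)) *\<^sub>R (Q - P)"

definition angle_at :: "point \<Rightarrow> point \<Rightarrow> point \<Rightarrow> real" where
  "angle_at P Z Q = arccos (((P - Z) \<bullet> (Q - Z)) / (norm (P - Z) * norm (Q - Z)))"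

definition weighted_floating_case :: "(nat \<Rightarrow> point) \<Rightarrow> (nat \<Rightarrow> real) \<Rightarrow> bool" where
  "weighted_floating_case A B \<longleftrightarrow>
     (\<forall>i\<in>{1..4::nat}. norm (\<Sum>j\<in>{1..4} - {i}. B j *\<^sub>R unit_vec (A i) (A j)) > B i)"

definition weighted_distance_sum :: "(nat \<Rightarrow> point) \<Rightarrow> (nat \<Rightarrow> real) \<Rightarrow> point \<Rightarrow> real" where
  "weighted_distance_sum A B X = (\<Sum>i\<in>{1..4::nat}. B i * dist X (A i))"

definition is_weighted_FT_point :: "(nat \<Rightarrow> point) \<Rightarrow> (nat \<Rightarrow> real) \<Rightarrow> point \<Rightarrow> bool" where
  "is_weighted_FT_point A B X0 \<longleftrightarrow> (\<forall>X. weighted_distance_sum A B X0 \<le> weighted_distance_sum A B X)"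

definition dynamic_plasticity :: "(nat \<Rightarrow> point) \<Rightarrow> real \<Rightarrow> point \<Rightarrow> (nat \<Rightarrow> real) set" where
  "dynamic_plasticity A c A0 =
     {B. (\<forall>i\<in>{1..4::nat}. B i > 0) \<and> (\<Sum>i\<in>{1..4}. B i) = c \<and>
         weighted_floating_case A B \<and> is_weighted_FT_point A B A0}"

end

theory Submission
  imports Defs
begin

text \<open>Let \<open>v i = B i *\<^sub>R unit_vec A0 (A i)\<close>. As \<open>A0\<close> is no vertex, the weighted distance
  sum is differentiable at \<open>A0\<close> with gradient \<open>-(v 1 + v 2 + v 3 + v 4)\<close>, and since it is
  convex, \<open>A0\<close> is its minimiser exactly when this resultant vanishes. A vertex that also
  minimised the sum would have to be aligned with \<open>A0\<close> and all other vertices, which is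
  impossible in a convex quadrilateral; this gives the floating case.

  By the law of cosines the two equations say \<open>norm (v 1 + v 2) = norm (v 3 + v 4)\<close> and
  \<open>norm (v 1 + v 4) = norm (v 2 + v 3)\<close>, which clearly hold when the resultant \<open>s\<close>
  vanishes.
  Conversely they give \<open>v 1 \<bullet> s = v 3 \<bullet> s\<close> and \<open>v 2 \<bullet> s = v 4 \<bullet> s\<close>, so opposite
  vertices lie on the same side of the line through \<open>A0\<close> orthogonal to \<open>s\<close>. Since the
  diagonals of a convex quadrilateral cross, all four vertices then lie strictly on one side
  of that line, which is impossible for an interior point \<open>A0\<close> unless \<open>s = 0\<close>.\<close>

lemma inner_add_sgn:
  fixes v w :: "'a::real_inner"
  assumes "v \<noteq> 0"
  shows "(v + w) \<bullet> sgn v = norm v + w \<bullet> sgn v"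
  using assms by (simp add: inner_add_left sgn_div_norm dot_square_norm power2_eq_square field_simps)

lemma norm_add_ge_inner_sgn:
  fixes v w :: "'a::real_inner"
  assumes "v \<noteq> 0"
  shows "norm v + w \<bullet> sgn v \<le> norm (v + w)"
  using norm_cauchy_schwarz[of "v + w" "sgn v"] assms by (simp add: inner_add_sgn norm_sgn)

lemma norm_add_eq_inner_sgn_imp_parallel:
  fixes v w :: "'a::real_inner"
  assumes "v \<noteq> 0" "norm (v + w) = norm v + w \<bullet> sgn v"
  shows "norm v *\<^sub>R (v + w) = norm (v + w) *\<^sub>R v"
proof -
  have "(v + w) \<bullet> sgn v = norm (v + w) * norm (sgn v)"
    using assms by (simp add: inner_add_sgn norm_sgn)
  then have "norm (v + w) *\<^sub>R sgn v = v + w"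
    using assms(1) norm_cauchy_schwarz_eq[of "v + w" "sgn v"] by (simp add: norm_sgn)
  then have "norm (v + w) *\<^sub>R (norm v *\<^sub>R sgn v) = norm v *\<^sub>R (v + w)"
    by (metis scaleR_left_commute)
  then show ?thesis
    using assms(1) by (simp add: sgn_div_norm)
qed

lemma aligned_if_norm_add_eq_inner_sgn:
  fixes v d :: "'a::real_inner"
  assumes "v \<noteq> 0" "d \<noteq> 0" "norm (v + d) = norm v + d \<bullet> sgn v"
  shows "\<exists>a. v = a *\<^sub>R d"
proof
  define c where "c = norm (v + d) - norm v"
  have parallel: "c *\<^sub>R v = norm v *\<^sub>R d"
    using norm_add_eq_inner_sgn_imp_parallel[OF assms(1,3)] by (simp add: c_def algebra_simps)
  with assms(1,2) have "c \<noteq> 0" by auto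
  have "(norm v / c) *\<^sub>R d = (1 / c) *\<^sub>R (norm v *\<^sub>R d)" by simp
  also have "\<dots> = v" using \<open>c \<noteq> 0\<close> by (simp flip: parallel)
  finally show "v = (norm v / c) *\<^sub>R d" ..
qed

lemma has_real_derivative_norm_line:
  fixes v w :: "'a::real_inner"
  assumes "v \<noteq> 0"
  shows "((\<lambda>t. norm (v + t *\<^sub>R w)) has_real_derivative w \<bullet> sgn v) (at 0)"
proof -
  have line: "((\<lambda>t. v + t *\<^sub>R w) has_derivative (\<lambda>t. t *\<^sub>R w)) (at 0)"
    by (auto intro!: derivative_eq_intros)
  have "((\<lambda>t. norm (v + t *\<^sub>R w)) has_derivative (\<lambda>t. (t *\<^sub>R w) \<bullet> sgn v)) (at 0)"
    using has_derivative_compose[OF line has_derivative_norm] assms by simp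
  then show ?thesis
    by (simp add: has_field_derivative_def mult.commute[of _ "w \<bullet> sgn v"])
qed

lemma weighted_dist_sum_ge_tangent:
  fixes A :: "'i \<Rightarrow> 'a::real_inner"
  assumes "\<forall>i\<in>I. 0 \<le> B i" "\<forall>i\<in>I. A i \<noteq> X0"
  shows "(\<Sum>i\<in>I. B i * dist X0 (A i)) - (X - X0) \<bullet> (\<Sum>i\<in>I. B i *\<^sub>R sgn (A i - X0))
    \<le> (\<Sum>i\<in>I. B i * dist X (A i))"
proof -
  have "B i * dist X0 (A i) - B i * ((X - X0) \<bullet> sgn (A i - X0)) \<le> B i * dist X (A i)"
    if "i \<in> I" for i
  proof -
    have "norm (X0 - A i) + (X - X0) \<bullet> sgn (X0 - A i) \<le> norm (X0 - A i + (X - X0))"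
      using assms(2) that by (intro norm_add_ge_inner_sgn) auto
    then have "dist X0 (A i) - (X - X0) \<bullet> sgn (A i - X0) \<le> dist X (A i)"
      by (simp add: dist_norm sgn_minus[of "A i - X0", simplified])
    then show ?thesis
      using assms(1) that by (simp add: right_diff_distrib[symmetric] mult_left_mono)
  qed
  then show ?thesis
    by (simp add: inner_sum_right sum_subtractf[symmetric] sum_mono)
qed

lemma weighted_dist_sum_minimal_iff:
  fixes A :: "'i \<Rightarrow> 'a::real_inner"
  assumes "finite I" "\<forall>i\<in>I. 0 \<le> B i" "\<forall>i\<in>I. A i \<noteq> X0"
  shows "(\<forall>X. (\<Sum>i\<in>I. B i * dist X0 (A i)) \<le> (\<Sum>i\<in>I. B i * dist X (A i)))
    \<longleftrightarrow> (\<Sum>i\<in>I. B i *\<^sub>R sgn (A i - X0)) = 0" (is "?min \<longleftrightarrow> ?r = 0")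
proof
  assume ?min
  define f where "f t = (\<Sum>i\<in>I. B i * norm (X0 - A i + t *\<^sub>R ?r))" for t
  have "(f has_real_derivative (\<Sum>i\<in>I. B i * (?r \<bullet> sgn (X0 - A i)))) (at 0)"
    unfolding f_def[abs_def] using assms(3)
    by (intro DERIV_sum DERIV_cmult has_real_derivative_norm_line) auto
  moreover have "\<forall>t. \<bar>0 - t\<bar> < 1 \<longrightarrow> f 0 \<le> f t"
    using \<open>?min\<close> by (simp add: f_def dist_norm algebra_simps)
  ultimately have "(\<Sum>i\<in>I. B i * (?r \<bullet> sgn (X0 - A i))) = 0"
    by (metis DERIV_local_min zero_less_one)
  moreover have "(\<Sum>i\<in>I. B i * (?r \<bullet> sgn (X0 - A i))) = - (?r \<bullet> ?r)"
    by (simp add: inner_sum_right sgn_minus[of "A _ - X0", simplified] sum_negf)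
  ultimately show "?r = 0" by simp
next
  assume "?r = 0"
  then show ?min
    using weighted_dist_sum_ge_tangent[OF assms(2,3)] by simp
qed

text \<open>The norm bound says that \<open>A i\<close> itself minimises the weighted distance sum; any other
  minimiser \<open>X\<close> must then lie on every line through \<open>A i\<close> and another point.\<close>

lemma weighted_dist_sum_minimal_at_vertex_aligned:
  fixes A :: "'i \<Rightarrow> 'a::real_inner"
  assumes "finite I" "i \<in> I" "\<forall>l\<in>I - {i}. 0 < B l \<and> A l \<noteq> A i" "X \<noteq> A i"
    and vertex: "norm (\<Sum>l\<in>I - {i}. B l *\<^sub>R sgn (A l - A i)) \<le> B i"
    and min: "(\<Sum>l\<in>I. B l * dist X (A l)) \<le> (\<Sum>l\<in>I. B l * dist (A i) (A l))"
  shows "\<forall>l\<in>I - {i}. \<exists>a. A l - A i = a *\<^sub>R (X - A i)"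
proof
  define T d g where "T = I - {i}" and "d = X - A i"
    and "g = (\<Sum>l\<in>I - {i}. B l *\<^sub>R sgn (A l - A i))"
  define gap where "gap l = dist X (A l) - (dist (A i) (A l) + d \<bullet> sgn (A i - A l))" for l
  have gap_nonneg: "0 \<le> gap l" if "l \<in> T" for l
  proof -
    have "norm (A i - A l) + d \<bullet> sgn (A i - A l) \<le> norm (A i - A l + d)"
      using assms(3) that by (intro norm_add_ge_inner_sgn) (auto simp: T_def)
    also have "A i - A l + d = X - A l" by (simp add: d_def)
    finally show ?thesis by (simp add: gap_def dist_norm)
  qed
  have sum_split: "(\<Sum>l\<in>I. f l) = f i + (\<Sum>l\<in>T. f l)" for f :: "'i \<Rightarrow> real"
    unfolding T_def using assms(1,2) by (rule sum.remove)
  have "d \<bullet> g \<le> norm d * norm g" by (rule norm_cauchy_schwarz)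
  also have "\<dots> \<le> B i * norm d"
    using mult_right_mono[OF vertex norm_ge_zero[of d]] by (simp add: g_def mult.commute)
  finally have "d \<bullet> g \<le> B i * norm d" .
  moreover have "(\<Sum>l\<in>T. B l * dist X (A l))
      = (\<Sum>l\<in>T. B l * dist (A i) (A l)) - d \<bullet> g + (\<Sum>l\<in>T. B l * gap l)"
    by (simp add: gap_def g_def T_def inner_sum_right sgn_minus[of "A _ - A i", simplified]
        algebra_simps sum.distrib sum_subtractf)
  ultimately have "(\<Sum>l\<in>T. B l * gap l) \<le> 0"
    using min by (simp add: sum_split d_def dist_norm norm_minus_commute)
  moreover have terms_nonneg: "\<forall>l\<in>T. 0 \<le> B l * gap l"
  proof
    fix l assume "l \<in> T"
    then have "0 < B l" using assms(3) by (simp add: T_def)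
    with gap_nonneg[OF \<open>l \<in> T\<close>] show "0 \<le> B l * gap l" by simp
  qed
  ultimately have "(\<Sum>l\<in>T. B l * gap l) = 0"
    using sum_nonneg[of T "\<lambda>l. B l * gap l"] by simp
  then have "\<forall>l\<in>T. B l * gap l = 0"
    using sum_nonneg_eq_0_iff[of T "\<lambda>l. B l * gap l"] terms_nonneg assms(1)
    by (simp only: T_def finite_Diff) blast
  fix l assume l: "l \<in> I - {i}"
  then have "B l * gap l = 0" "0 < B l" "A l \<noteq> A i"
    using \<open>\<forall>l\<in>T. B l * gap l = 0\<close> assms(3) by (simp_all add: T_def)
  then have "gap l = 0" by simp
  moreover have "norm (A i - A l + d) = dist X (A l)" by (simp add: d_def dist_norm)
  ultimately have "norm (A i - A l + d) = norm (A i - A l) + d \<bullet> sgn (A i - A l)"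
    by (simp add: gap_def dist_norm)
  then have "\<exists>a. A i - A l = a *\<^sub>R d"
    using aligned_if_norm_add_eq_inner_sgn[of "A i - A l" d] \<open>A l \<noteq> A i\<close> assms(4)
    by (simp add: d_def)
  then show "\<exists>a. A l - A i = a *\<^sub>R (X - A i)"
    by (metis d_def minus_diff_eq scaleR_minus_left)
qed

lemma unit_vec_eq_sgn: "unit_vec P Q = sgn (Q - P)"
  by (simp add: unit_vec_def sgn_div_norm divide_inverse_commute)

lemma cos_angle_at:
  assumes "P \<noteq> Z" "Q \<noteq> Z"
  shows "cos (angle_at P Z Q) = unit_vec Z P \<bullet> unit_vec Z Q"
proof -
  have "\<bar>(P - Z) \<bullet> (Q - Z)\<bar> \<le> norm (P - Z) * norm (Q - Z)"
    by (rule Cauchy_Schwarz_ineq2)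
  with assms have "\<bar>(P - Z) \<bullet> (Q - Z) / (norm (P - Z) * norm (Q - Z))\<bar> \<le> 1"
    by (simp add: divide_le_eq_1)
  then show ?thesis
    by (simp add: angle_at_def unit_vec_def cos_arccos_abs)
qed

lemma power2_norm_add_scaleR_unit_vec:
  assumes "P \<noteq> Z" "Q \<noteq> Z"
  shows "norm (a *\<^sub>R unit_vec Z P + b *\<^sub>R unit_vec Z Q) ^ 2
    = a ^ 2 + b ^ 2 + 2 * a * b * cos (angle_at P Z Q)"
proof -
  define u v where "u = unit_vec Z P" and "v = unit_vec Z Q"
  have "u \<bullet> u = 1" "v \<bullet> v = 1"
    using assms by (simp_all add: u_def v_def unit_vec_eq_sgn dot_square_norm norm_sgn)
  then have "norm (a *\<^sub>R u + b *\<^sub>R v) ^ 2 = a ^ 2 + b ^ 2 + 2 * a * b * (u \<bullet> v)"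
    unfolding power2_norm_eq_inner by (simp add: inner_add_left inner_add_right inner_commute[of v u]
        power2_eq_square algebra_simps)
  then show ?thesis
    by (simp add: u_def v_def cos_angle_at[OF assms])
qed

lemma inner_sum_eq_if_norm_add_eq:
  fixes x y z w :: "'a::real_inner"
  assumes "norm (x + y) = norm (z + w)" "norm (x + w) = norm (y + z)"
  shows "x \<bullet> (x + y + z + w) = z \<bullet> (x + y + z + w)"
    and "y \<bullet> (x + y + z + w) = w \<bullet> (x + y + z + w)"
proof -
  have "(x + y) \<bullet> (x + y) = (z + w) \<bullet> (z + w)" "(x + w) \<bullet> (x + w) = (y + z) \<bullet> (y + z)"
    using assms by (simp_all add: dot_square_norm)
  then show "x \<bullet> (x + y + z + w) = z \<bullet> (x + y + z + w)"
    and "y \<bullet> (x + y + z + w) = w \<bullet> (x + y + z + w)"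
    by (simp_all add: inner_add_left inner_add_right inner_commute)
qed

lemma atLeastAtMost_1_4: "{1..4::nat} = {1, 2, 3, 4}"
  by auto

lemma sum_atLeastAtMost_1_4: "(\<Sum>i\<in>{1..4::nat}. f i) = f 1 + f 2 + f 3 + f 4"
  unfolding atLeastAtMost_1_4 by (simp add: add.assoc)

lemma notin_interior_convex_hull_if_supporting:
  fixes w :: "'a::euclidean_space"
  assumes "w \<noteq> 0" "\<forall>X\<in>S. w \<bullet> X \<le> w \<bullet> P"
  shows "P \<notin> interior (convex hull S)"
proof
  assume "P \<in> interior (convex hull S)"
  moreover have "convex hull S \<subseteq> {X. w \<bullet> X \<le> w \<bullet> P}"
    using assms(2) by (intro hull_minimal convex_halfspace_le) auto
  ultimately have "P \<in> interior {X. w \<bullet> X \<le> w \<bullet> P}"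
    using interior_mono by blast
  with assms(1) show False by simp
qed

lemma orient_rotate: "orient p q r = orient q r p"
  by (simp add: orient_def algebra_simps)

lemma orient_swap: "orient p q r = - orient q p r"
  by (simp add: orient_def algebra_simps)

lemma orient_eq_0_if_aligned:
  assumes "Q - P = a *\<^sub>R d" "R - P = b *\<^sub>R d"
  shows "orient P Q R = 0"
proof -
  have "Q = P + a *\<^sub>R d" "R = P + b *\<^sub>R d" using assms by (simp_all add: algebra_simps)
  then show ?thesis by (simp add: orient_def algebra_simps)
qed

lemma orient_affine_dependence:
  "orient q r s *\<^sub>R p + orient s p q *\<^sub>R r = orient r s p *\<^sub>R q + orient p q r *\<^sub>R s"
  "orient q r s + orient s p q = orient r s p + orient p q r"
  by (simp_all add: vec_eq_iff forall_2 orient_def algebra_simps)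

lemma orient_eq_inner_normal:
  assumes "P \<noteq> Q"
  obtains w where "w \<noteq> 0" "\<And>X. orient P Q X = w \<bullet> (X - P)"
proof
  define w :: point where "w = (\<chi> i. if i = 1 then P$2 - Q$2 else Q$1 - P$1)"
  show "orient P Q X = w \<bullet> (X - P)" for X
    by (simp add: w_def orient_def inner_vec_def sum_2 algebra_simps)
  show "w \<noteq> 0"
    using assms by (auto simp: w_def vec_eq_iff forall_2)
qed

lemma notin_interior_convex_hull_if_strict_side:
  assumes "0 < k * orient Q T P" "k * orient Q T R \<le> 0"
  shows "P \<notin> interior (convex hull {P, Q, R, T})"
proof -
  have "Q \<noteq> T" using assms(1) by (auto simp: orient_def)
  then obtain w where "w \<noteq> 0" and w: "\<And>X. orient Q T X = w \<bullet> (X - Q)"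
    using orient_eq_inner_normal by blast
  have "k \<noteq> 0" using assms(1) by auto
  have "orient Q T Q = 0" "orient Q T T = 0" by (simp_all add: orient_def)
  then have "\<forall>X\<in>{P, Q, R, T}. k * orient Q T X \<le> k * orient Q T P"
    using assms by auto
  then have "\<forall>X\<in>{P, Q, R, T}. (k *\<^sub>R w) \<bullet> X \<le> (k *\<^sub>R w) \<bullet> P"
    by (simp add: w inner_diff_right right_diff_distrib)
  moreover have "k *\<^sub>R w \<noteq> 0" using \<open>k \<noteq> 0\<close> \<open>w \<noteq> 0\<close> by simp
  ultimately show ?thesis
    using notin_interior_convex_hull_if_supporting by blast
qed

lemma convex_quadrilateral_orientation:
  assumes "convex_quadrilateral A"
  obtains k :: real where "0 < k * orient (A 1) (A 2) (A 3)" "0 < k * orient (A 2) (A 3) (A 4)"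
    "0 < k * orient (A 3) (A 4) (A 1)" "0 < k * orient (A 4) (A 1) (A 2)"
  using assms unfolding convex_quadrilateral_def
  by (metis mult_1 mult_minus1 neg_0_less_iff_less)

text \<open>Each vertex lies strictly on one side of the diagonal joining its neighbours, and the
  opposite vertex on the other side.\<close>

lemma convex_quadrilateral_vertex_notin_interior:
  assumes "convex_quadrilateral A" "i \<in> {1..4}"
  shows "A i \<notin> interior (convex hull {A 1, A 2, A 3, A 4})"
proof -
  obtain k where k: "0 < k * orient (A 1) (A 2) (A 3)" "0 < k * orient (A 2) (A 3) (A 4)"
    "0 < k * orient (A 3) (A 4) (A 1)" "0 < k * orient (A 4) (A 1) (A 2)"
    using convex_quadrilateral_orientation[OF assms(1)] by blast
  have "i = 1 \<or> i = 2 \<or> i = 3 \<or> i = 4" using assms(2) by auto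
  then show ?thesis
  proof (elim disjE)
    assume "i = 1"
    then show ?thesis
      using notin_interior_convex_hull_if_strict_side[of k "A 2" "A 4" "A 1" "A 3"] k
        orient_rotate[of "A 2" "A 4" "A 1"] orient_swap[of "A 2" "A 4" "A 3"]
        orient_rotate[of "A 4" "A 2" "A 3"]
      by (simp add: insert_commute)
  next
    assume "i = 2"
    then show ?thesis
      using notin_interior_convex_hull_if_strict_side[of k "A 3" "A 1" "A 2" "A 4"] k
        orient_rotate[of "A 3" "A 1" "A 2"] orient_swap[of "A 3" "A 1" "A 4"]
        orient_rotate[of "A 1" "A 3" "A 4"]
      by (simp add: insert_commute)
  next
    assume "i = 3"
    then show ?thesis
      using notin_interior_convex_hull_if_strict_side[of k "A 4" "A 2" "A 3" "A 1"] k
        orient_rotate[of "A 4" "A 2" "A 3"] orient_swap[of "A 4" "A 2" "A 1"]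
        orient_rotate[of "A 2" "A 4" "A 1"]
      by (simp add: insert_commute)
  next
    assume "i = 4"
    then show ?thesis
      using notin_interior_convex_hull_if_strict_side[of k "A 1" "A 3" "A 4" "A 2"] k
        orient_rotate[of "A 1" "A 3" "A 4"] orient_swap[of "A 1" "A 3" "A 2"]
        orient_rotate[of "A 3" "A 1" "A 2"]
      by (simp add: insert_commute)
  qed
qed

lemma convex_quadrilateral_obtain_orient_ne_0:
  assumes "convex_quadrilateral A" "i \<in> {1..4}"
  obtains j k where "j \<in> {1..4} - {i}" "k \<in> {1..4} - {i}" "orient (A i) (A j) (A k) \<noteq> 0"
proof -
  have "orient (A 1) (A 2) (A 3) \<noteq> 0" "orient (A 2) (A 3) (A 4) \<noteq> 0"
    "orient (A 3) (A 4) (A 1) \<noteq> 0" "orient (A 4) (A 1) (A 2) \<noteq> 0"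
    using assms(1) unfolding convex_quadrilateral_def by auto
  moreover have "i = 1 \<or> i = 2 \<or> i = 3 \<or> i = 4" using assms(2) by auto
  ultimately show ?thesis
    using that[of 2 3] that[of 3 4] that[of 4 1] that[of 1 2] by auto
qed

lemma convex_quadrilateral_vertices_distinct:
  assumes "convex_quadrilateral A" "i \<in> {1..4}" "j \<in> {1..4}" "i \<noteq> j"
  shows "A i \<noteq> A j"
proof -
  have "orient (A 1) (A 2) (A 3) \<noteq> 0" "orient (A 2) (A 3) (A 4) \<noteq> 0"
    "orient (A 3) (A 4) (A 1) \<noteq> 0"
    using assms(1) unfolding convex_quadrilateral_def by auto
  then have "A 1 \<noteq> A 2" "A 1 \<noteq> A 3" "A 2 \<noteq> A 3" "A 2 \<noteq> A 4" "A 3 \<noteq> A 4" "A 1 \<noteq> A 4"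
    by (auto simp: orient_def)
  moreover have "i \<in> {1, 2, 3, 4}" "j \<in> {1, 2, 3, 4}" using assms(2,3) by auto
  ultimately show ?thesis
    using assms(4) by auto
qed

text \<open>Up to the orientation sign the weights are the areas of the triangles opposite each
  vertex; dividing either side of the vector identity by the weight sum gives the point where
  the diagonals meet.\<close>

lemma convex_quadrilateral_diagonals_cross:
  assumes "convex_quadrilateral A"
  obtains l1 l3 m2 m4 :: real where "0 < l1" "0 < l3" "0 < m2" "0 < m4" "l1 + l3 = m2 + m4"
    "l1 *\<^sub>R A 1 + l3 *\<^sub>R A 3 = m2 *\<^sub>R A 2 + m4 *\<^sub>R A 4"
proof -
  obtain k where k: "0 < k * orient (A 1) (A 2) (A 3)" "0 < k * orient (A 2) (A 3) (A 4)"
    "0 < k * orient (A 3) (A 4) (A 1)" "0 < k * orient (A 4) (A 1) (A 2)"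
    using convex_quadrilateral_orientation[OF assms] by blast
  note dependence = orient_affine_dependence[where p = "A 1" and q = "A 2" and r = "A 3" and s = "A 4"]
  have "k * orient (A 2) (A 3) (A 4) + k * orient (A 4) (A 1) (A 2)
      = k * orient (A 3) (A 4) (A 1) + k * orient (A 1) (A 2) (A 3)"
    using dependence(2) by (simp flip: distrib_left)
  moreover have "(k * orient (A 2) (A 3) (A 4)) *\<^sub>R A 1 + (k * orient (A 4) (A 1) (A 2)) *\<^sub>R A 3
      = (k * orient (A 3) (A 4) (A 1)) *\<^sub>R A 2 + (k * orient (A 1) (A 2) (A 3)) *\<^sub>R A 4"
  proof -
    have "k *\<^sub>R (orient (A 2) (A 3) (A 4) *\<^sub>R A 1 + orient (A 4) (A 1) (A 2) *\<^sub>R A 3)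
        = k *\<^sub>R (orient (A 3) (A 4) (A 1) *\<^sub>R A 2 + orient (A 1) (A 2) (A 3) *\<^sub>R A 4)"
      using dependence(1) by simp
    then show ?thesis by (simp only: scaleR_add_right scaleR_scaleR)
  qed
  ultimately show ?thesis
    using that k by blast
qed

lemma convex_quadrilateral_opposite_vertices_same_side:
  assumes "convex_quadrilateral A"
    and "0 < s \<bullet> (A 1 - A0) \<longleftrightarrow> 0 < s \<bullet> (A 3 - A0)"
    and "0 < s \<bullet> (A 2 - A0) \<longleftrightarrow> 0 < s \<bullet> (A 4 - A0)"
    and "0 < s \<bullet> (A 1 - A0) \<or> 0 < s \<bullet> (A 2 - A0)"
  shows "\<forall>i\<in>{1..4}. 0 < s \<bullet> (A i - A0)"
proof -
  obtain l1 l3 m2 m4 :: real where pos: "0 < l1" "0 < l3" "0 < m2" "0 < m4"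
    and "l1 + l3 = m2 + m4" "l1 *\<^sub>R A 1 + l3 *\<^sub>R A 3 = m2 *\<^sub>R A 2 + m4 *\<^sub>R A 4"
    using convex_quadrilateral_diagonals_cross[OF assms(1)] by blast
  then have "l1 *\<^sub>R (A 1 - A0) + l3 *\<^sub>R (A 3 - A0) = m2 *\<^sub>R (A 2 - A0) + m4 *\<^sub>R (A 4 - A0)"
    by (simp add: algebra_simps flip: scaleR_add_left)
  then have "s \<bullet> (l1 *\<^sub>R (A 1 - A0) + l3 *\<^sub>R (A 3 - A0))
      = s \<bullet> (m2 *\<^sub>R (A 2 - A0) + m4 *\<^sub>R (A 4 - A0))"
    by (rule arg_cong)
  moreover define a where "a i = s \<bullet> (A i - A0)" for i
  ultimately have cross: "l1 * a 1 + l3 * a 3 = m2 * a 2 + m4 * a 4"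
    by (simp add: inner_add_right)
  have "0 < a 1 \<and> 0 < a 2 \<and> 0 < a 3 \<and> 0 < a 4"
  proof (cases "0 < a 1")
    case True
    with assms(2) have "0 < a 3" by (simp add: a_def)
    have "0 < a 2"
    proof (rule ccontr)
      assume "\<not> 0 < a 2"
      with assms(3) have "m2 * a 2 \<le> 0" "m4 * a 4 \<le> 0"
        using pos by (simp_all add: a_def mult_nonneg_nonpos)
      moreover have "0 < l1 * a 1" "0 < l3 * a 3" using True \<open>0 < a 3\<close> pos by simp_all
      ultimately show False using cross by linarith
    qed
    with True \<open>0 < a 3\<close> assms(3) show ?thesis by (simp add: a_def)
  next
    case False
    with assms(2-4) have "a 1 \<le> 0" "a 3 \<le> 0" "0 < a 2" "0 < a 4" by (auto simp: a_def)
    then have "l1 * a 1 \<le> 0" "l3 * a 3 \<le> 0" "0 < m2 * a 2" "0 < m4 * a 4"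
      using pos by (simp_all add: mult_nonneg_nonpos)
    with cross show ?thesis by linarith
  qed
  then show ?thesis unfolding atLeastAtMost_1_4 by (simp add: a_def)
qed

lemma weighted_floating_case_if_FT_point:
  assumes quad: "convex_quadrilateral A" and "\<forall>i\<in>{1..4}. 0 < B i" "\<forall>i\<in>{1..4}. A0 \<noteq> A i"
    and FT: "is_weighted_FT_point A B A0"
  shows "weighted_floating_case A B"
  unfolding weighted_floating_case_def
proof
  fix i :: nat assume i: "i \<in> {1..4}"
  obtain j k where jk: "j \<in> {1..4} - {i}" "k \<in> {1..4} - {i}" "orient (A i) (A j) (A k) \<noteq> 0"
    using convex_quadrilateral_obtain_orient_ne_0[OF quad i] by blast
  show "B i < norm (\<Sum>j\<in>{1..4} - {i}. B j *\<^sub>R unit_vec (A i) (A j))"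
  proof (rule ccontr)
    assume "\<not> ?thesis"
    then have "norm (\<Sum>l\<in>{1..4} - {i}. B l *\<^sub>R sgn (A l - A i)) \<le> B i"
      by (simp add: unit_vec_eq_sgn)
    moreover have "\<forall>l\<in>{1..4} - {i}. 0 < B l \<and> A l \<noteq> A i"
      using assms(2) convex_quadrilateral_vertices_distinct[OF quad _ i] by auto
    moreover have "(\<Sum>l\<in>{1..4}. B l * dist A0 (A l)) \<le> (\<Sum>l\<in>{1..4}. B l * dist (A i) (A l))"
      using FT by (simp add: is_weighted_FT_point_def weighted_distance_sum_def)
    ultimately have "\<forall>l\<in>{1..4} - {i}. \<exists>a. A l - A i = a *\<^sub>R (A0 - A i)"
      using weighted_dist_sum_minimal_at_vertex_aligned[of "{1..4}" i B A A0] i assms(3) by auto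
    then have "orient (A i) (A j) (A k) = 0"
      using jk(1,2) orient_eq_0_if_aligned by metis
    with jk(3) show False ..
  qed
qed

lemma convex_quadrilateral_resultant_eq_0_iff:
  assumes quad: "convex_quadrilateral A"
    and int: "A0 \<in> interior (convex hull {A 1, A 2, A 3, A 4})"
    and pos: "\<forall>i\<in>{1..4}. 0 < B i"
  defines "v \<equiv> \<lambda>i. B i *\<^sub>R unit_vec A0 (A i)"
  shows "v 1 + v 2 + v 3 + v 4 = 0 \<longleftrightarrow>
    norm (v 1 + v 2) = norm (v 3 + v 4) \<and> norm (v 1 + v 4) = norm (v 2 + v 3)"
proof
  assume "v 1 + v 2 + v 3 + v 4 = 0"
  then have "v 1 + v 2 = - (v 3 + v 4)" "v 1 + v 4 = - (v 2 + v 3)"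
    by (simp_all add: eq_neg_iff_add_eq_0 algebra_simps)
  then show "norm (v 1 + v 2) = norm (v 3 + v 4) \<and> norm (v 1 + v 4) = norm (v 2 + v 3)"
    by (metis norm_minus_cancel)
next
  assume norms: "norm (v 1 + v 2) = norm (v 3 + v 4) \<and> norm (v 1 + v 4) = norm (v 2 + v 3)"
  define s where "s = v 1 + v 2 + v 3 + v 4"
  have same: "v 1 \<bullet> s = v 3 \<bullet> s" "v 2 \<bullet> s = v 4 \<bullet> s"
    using inner_sum_eq_if_norm_add_eq[of "v 1" "v 2" "v 3" "v 4"] norms by (simp_all add: s_def)
  have side_iff: "0 < v i \<bullet> s \<longleftrightarrow> 0 < s \<bullet> (A i - A0)" if "i \<in> {1..4}" for i
  proof -
    have "A i \<noteq> A0"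
      using convex_quadrilateral_vertex_notin_interior[OF quad that] int by auto
    define c where "c = B i / norm (A i - A0)"
    have "0 < c" using pos that \<open>A i \<noteq> A0\<close> by (simp add: c_def)
    moreover have "v i \<bullet> s = c * (s \<bullet> (A i - A0))"
      unfolding v_def c_def unit_vec_def by (simp add: inner_commute[of s])
    ultimately show ?thesis by (simp add: zero_less_mult_iff)
  qed
  show "v 1 + v 2 + v 3 + v 4 = 0"
  proof (rule ccontr)
    assume "v 1 + v 2 + v 3 + v 4 \<noteq> 0"
    then have "0 < s \<bullet> s" by (simp add: s_def)
    moreover have "s \<bullet> s = v 1 \<bullet> s + v 2 \<bullet> s + v 3 \<bullet> s + v 4 \<bullet> s"
      by (metis s_def inner_add_left)
    ultimately have "0 < v 1 \<bullet> s \<or> 0 < v 2 \<bullet> s" using same by linarith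
    then have "0 < s \<bullet> (A 1 - A0) \<or> 0 < s \<bullet> (A 2 - A0)"
      using side_iff[of 1] side_iff[of 2] by simp
    moreover have "0 < s \<bullet> (A 1 - A0) \<longleftrightarrow> 0 < s \<bullet> (A 3 - A0)"
      using side_iff[of 1] side_iff[of 3] same(1) by simp
    moreover have "0 < s \<bullet> (A 2 - A0) \<longleftrightarrow> 0 < s \<bullet> (A 4 - A0)"
      using side_iff[of 2] side_iff[of 4] same(2) by simp
    ultimately have "\<forall>i\<in>{1..4}. 0 < s \<bullet> (A i - A0)"
      using convex_quadrilateral_opposite_vertices_same_side[OF quad] by blast
    then have "\<forall>X\<in>{A 1, A 2, A 3, A 4}. (- s) \<bullet> X \<le> (- s) \<bullet> A0"
      unfolding atLeastAtMost_1_4 by (auto simp: inner_diff_right)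
    moreover have "- s \<noteq> 0" using \<open>0 < s \<bullet> s\<close> by auto
    ultimately show False
      using notin_interior_convex_hull_if_supporting int by blast
  qed
qed

theorem proposition2:
  fixes A :: "nat \<Rightarrow> real^2" and A0 :: "real^2" and B :: "nat \<Rightarrow> real" and c :: real
  assumes "convex_quadrilateral A"
    and "c > 0"
    and "A0 \<in> interior (convex hull {A 1, A 2, A 3, A 4})"
    and "\<forall>i\<in>{1..4::nat}. B i > 0"
  shows "B \<in> dynamic_plasticity A c A0 \<longleftrightarrow>
    (B 1 ^ 2 + B 2 ^ 2 + 2 * B 1 * B 2 * cos (angle_at (A 1) A0 (A 2)) =
       B 3 ^ 2 + B 4 ^ 2 + 2 * B 3 * B 4 * cos (angle_at (A 3) A0 (A 4)) \<and>
     B 1 ^ 2 + B 4 ^ 2 + 2 * B 1 * B 4 * cos (angle_at (A 1) A0 (A 4)) =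
       B 2 ^ 2 + B 3 ^ 2 + 2 * B 2 * B 3 * cos (angle_at (A 2) A0 (A 3)) \<and>
     B 1 + B 2 + B 3 + B 4 = c)"
proof -
  define v where "v i = B i *\<^sub>R unit_vec A0 (A i)" for i
  have vertices: "\<forall>i\<in>{1..4}. A0 \<noteq> A i"
    using convex_quadrilateral_vertex_notin_interior[OF assms(1)] assms(3) by metis
  then have "A i \<noteq> A0" if "i \<in> {1, 2, 3, 4}" for i
    using that unfolding atLeastAtMost_1_4 by auto
  then have law_of_cosines:
    "norm (v i + v j) ^ 2 = B i ^ 2 + B j ^ 2 + 2 * B i * B j * cos (angle_at (A i) A0 (A j))"
    if "i \<in> {1, 2, 3, 4}" "j \<in> {1, 2, 3, 4}" for i j
    using that by (simp add: v_def power2_norm_add_scaleR_unit_vec)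
  have "(\<forall>X. (\<Sum>i\<in>{1..4}. B i * dist A0 (A i)) \<le> (\<Sum>i\<in>{1..4}. B i * dist X (A i)))
      \<longleftrightarrow> (\<Sum>i\<in>{1..4}. B i *\<^sub>R sgn (A i - A0)) = 0"
    using assms(4) vertices by (intro weighted_dist_sum_minimal_iff) auto
  then have FT_iff: "is_weighted_FT_point A B A0 \<longleftrightarrow> v 1 + v 2 + v 3 + v 4 = 0"
    unfolding is_weighted_FT_point_def weighted_distance_sum_def sum_atLeastAtMost_1_4
    by (simp add: v_def unit_vec_eq_sgn)
  have "B \<in> dynamic_plasticity A c A0
      \<longleftrightarrow> v 1 + v 2 + v 3 + v 4 = 0 \<and> B 1 + B 2 + B 3 + B 4 = c"
    using weighted_floating_case_if_FT_point[OF assms(1,4) vertices] assms(4)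
    unfolding dynamic_plasticity_def sum_atLeastAtMost_1_4 by (auto simp: FT_iff)
  also have "\<dots> \<longleftrightarrow> norm (v 1 + v 2) ^ 2 = norm (v 3 + v 4) ^ 2
      \<and> norm (v 1 + v 4) ^ 2 = norm (v 2 + v 3) ^ 2 \<and> B 1 + B 2 + B 3 + B 4 = c"
    using convex_quadrilateral_resultant_eq_0_iff[OF assms(1,3,4)] by (simp add: v_def)
  finally show ?thesis by (simp add: law_of_cosines)
qed

end
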